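(* Let $F$ be an abstract argumentation framework, let $\alpha_0(X,Y,Z)=X\cup Y$, and let $\beta_0(G,S)=1$ if $\mathrm{IS}^u(G)\cup\mathrm{IS}^{uc}(G)=\emptyset$ and $\beta_0(G,S)=0$ otherwise. For every $E$ with $(F,\emptyset)\leadsto^{\alpha_0,\beta_0}(F',E)$ for some $F'$: (1) $E\subseteq E'$ for some preferred extension $E'$ of $F$, and (2) $E_{id}\subseteq E$, where $E_{id}$ is the ideal extension of $F$.
   Context: An abstract argumentation framework (AF) is a pair $F=(A,R)$ with $A$ a finite set of arguments and $R\subseteq A\times A$ ($a\to b$ means $(a,b)\in R$). For $S\subseteq A$: $S^+=\{a\mid \exists b\in S: b\to a\}$, $S^-=\{a\mid\exists b\in S: a\to b\}$; for sets $S,S'$, $S\to S'$ means $S^+\cap S'\neq\emptyset$. $S$ is admissible if it is conflict-free and every attacker of an element of $S$ is attacked by some element of $S$. A preferred extension is an inclusion-maximal admissible set; the ideal extension is the inclusion-maximal admissible set contained in every preferred extension. An initial set is a non-empty admissible set with no non-empty admissible proper subset; $\mathrm{IS}(G)$ is the set of initial sets of $G$. An initial set $S$ is unattacked if $S^-=\emptyset$; unchallenged if $S^-\neq\emptyset$ and no $S'\in\mathrm{IS}(G)$ has $S'\to S$; challenged if some $S'\in\mathrm{IS}(G)$ has $S'\to S$. Write $\mathrm{IS}^{u}(G),\mathrm{IS}^{uc}(G),\mathrm{IS}^{c}(G)$ for these sets. The reduct is $G^S=(A',R\cap(A'\times A'))$ with $A'=A\setminus(S\cup S^+)$. Given a selection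 function $\alpha$ (mapping three sets $X,Y,Z$ of sets of arguments to a subset of $X\cup Y\cup Z$), transitions are $(G,S)\to(G^{S'},S\cup S')$ whenever $S'\in\alpha(\mathrm{IS}^u(G),\mathrm{IS}^{uc}(G),\mathrm{IS}^c(G))$. For a termination function $\beta$ (mapping pairs (AF, set) to $\{0,1\}$), $(F,S)\leadsto^{\alpha,\beta}(F',S')$ means $(F',S')$ is reachable from $(F,S)$ in finitely many (possibly zero) transitions and $\beta(F',S')=1$. *)

theory Defs
  imports Main
begin

type_synonym 'a af = "'a set \<times> ('a \<times> 'a) set"

definition AF :: "'a af \<Rightarrow> bool" where
  "AF F \<longleftrightarrow> finite (fst F) \<and> snd F \<subseteq> fst F \<times> fst F"

definition args :: "'a af \<Rightarrow> 'a set" where "args F = fst F"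
definition att :: "'a af \<Rightarrow> ('a \<times> 'a) set" where "att F = snd F"

definition plus :: "'a af \<Rightarrow> 'a set \<Rightarrow> 'a set" where
  "plus F S = {a. \<exists>b\<in>S. (b, a) \<in> att F}"

definition minus :: "'a af \<Rightarrow> 'a set \<Rightarrow> 'a set" where
  "minus F S = {a. \<exists>b\<in>S. (a, b) \<in> att F}"

definition attacks_set :: "'a af \<Rightarrow> 'a set \<Rightarrow> 'a set \<Rightarrow> bool" where
  "attacks_set F S S' \<longleftrightarrow> plus F S \<inter> S' \<noteq> {}"

definition conflict_free :: "'a af \<Rightarrow> 'a set \<Rightarrow> bool" where
  "conflict_free F S \<longleftrightarrow> (\<forall>a\<in>S. \<forall>b\<in>S. (a, b) \<notin> att F)"

definition admissible :: "'a af \<Rightarrow> 'a set \<Rightarrow> bool" where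
  "admissible F S \<longleftrightarrow> S \<subseteq> args F \<and> conflict_free F S \<and>
     (\<forall>a\<in>S. \<forall>b. (b, a) \<in> att F \<longrightarrow> (\<exists>c\<in>S. (c, b) \<in> att F))"

definition preferred :: "'a af \<Rightarrow> 'a set \<Rightarrow> bool" where
  "preferred F S \<longleftrightarrow> admissible F S \<and> (\<forall>T. admissible F T \<and> S \<subseteq> T \<longrightarrow> T = S)"

definition ideal_ext :: "'a af \<Rightarrow> 'a set \<Rightarrow> bool" where
  "ideal_ext F S \<longleftrightarrow> admissible F S \<and> (\<forall>P. preferred F P \<longrightarrow> S \<subseteq> P) \<and>
     (\<forall>T. admissible F T \<and> (\<forall>P. preferred F P \<longrightarrow> T \<subseteq> P) \<and> S \<subseteq> T \<longrightarrow> T = S)"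

definition initial :: "'a af \<Rightarrow> 'a set \<Rightarrow> bool" where
  "initial F S \<longleftrightarrow> S \<noteq> {} \<and> admissible F S \<and>
     (\<forall>T. T \<noteq> {} \<and> T \<subset> S \<longrightarrow> \<not> admissible F T)"

definition IS :: "'a af \<Rightarrow> 'a set set" where
  "IS F = {S. initial F S}"

definition IS_u :: "'a af \<Rightarrow> 'a set set" where
  "IS_u F = {S \<in> IS F. minus F S = {}}"

definition IS_uc :: "'a af \<Rightarrow> 'a set set" where
  "IS_uc F = {S \<in> IS F. minus F S \<noteq> {} \<and> \<not> (\<exists>S'\<in>IS F. attacks_set F S' S)}"

definition IS_c :: "'a af \<Rightarrow> 'a set set" where
  "IS_c F = {S \<in> IS F. \<exists>S'\<in>IS F. attacks_set F S' S}"

definition reduct :: "'a af \<Rightarrow> 'a set \<Rightarrow> 'a af" where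
  "reduct F S = (let A' = args F - (S \<union> plus F S) in (A', att F \<inter> (A' \<times> A')))"

definition trans_step ::
  "('a set set \<Rightarrow> 'a set set \<Rightarrow> 'a set set \<Rightarrow> 'a set set)
   \<Rightarrow> ('a af \<times> 'a set) \<Rightarrow> ('a af \<times> 'a set) \<Rightarrow> bool" where
  "trans_step \<alpha> c c' \<longleftrightarrow> (\<exists>G S S'. c = (G, S) \<and>
      S' \<in> \<alpha> (IS_u G) (IS_uc G) (IS_c G) \<and> c' = (reduct G S', S \<union> S'))"

definition leadsto ::
  "('a set set \<Rightarrow> 'a set set \<Rightarrow> 'a set set \<Rightarrow> 'a set set)
   \<Rightarrow> ('a af \<Rightarrow> 'a set \<Rightarrow> bool)
   \<Rightarrow> 'a af \<Rightarrow> 'a set \<Rightarrow> 'a af \<Rightarrow> 'a set \<Rightarrow> bool" where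
  "leadsto \<alpha> \<beta> F S F' S' \<longleftrightarrow> (trans_step \<alpha>)\<^sup>*\<^sup>* (F, S) (F', S') \<and> \<beta> F' S'"

definition alpha0 :: "'a set set \<Rightarrow> 'a set set \<Rightarrow> 'a set set \<Rightarrow> 'a set set" where
  "alpha0 X Y Z = X \<union> Y"

definition beta0 :: "'a af \<Rightarrow> 'a set \<Rightarrow> bool" where
  "beta0 G S \<longleftrightarrow> IS_u G \<union> IS_uc G = {}"

end

theory Submission
  imports Defs
begin

(* Every state (G, S) reachable from (F, {}) satisfies G = F^S with S admissible in F, because an
   admissible set of the reduct F^S extends S to an admissible set of F. So E lies in a preferred
   extension. The ideal extension I is conflict-free together with every admissible set, since both
   lie in a common preferred extension. Hence, if I were not contained in E, then I - E would be a
   non-empty admissible set of F^E and would contain an initial set K of F^E. An initial set K' of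
   F^E attacking K is impossible: E \<union> K' is admissible in F, hence compatible with I. So K is
   unattacked or unchallenged, contradicting termination by beta0. *)

lemma args_reduct [simp]: "args (reduct F S) = args F - (S \<union> plus F S)"
  by (simp add: reduct_def args_def Let_def)

lemma att_reduct [simp]:
  "att (reduct F S) = att F \<inter> ((args F - (S \<union> plus F S)) \<times> (args F - (S \<union> plus F S)))"
  by (simp add: reduct_def att_def args_def Let_def)

lemma reduct_empty: "AF F \<Longrightarrow> reduct F {} = F"
  by (cases F) (auto simp: reduct_def AF_def args_def att_def plus_def Let_def)

lemma reduct_reduct:
  assumes "S' \<subseteq> args (reduct F S)"
  shows "reduct (reduct F S) S' = reduct F (S \<union> S')"
proof -
  have args_eq: "args (reduct (reduct F S) S') = args (reduct F (S \<union> S'))"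
    using assms by (auto simp: plus_def) blast
  then have "att (reduct (reduct F S) S') = att (reduct F (S \<union> S'))"
    by auto
  with args_eq show ?thesis
    by (simp add: args_def att_def prod_eq_iff)
qed

lemma admissible_union_reduct:
  assumes "AF F" "admissible F S" "admissible (reduct F S) S'"
  shows "admissible F (S \<union> S')"
proof -
  have att_args: "att F \<subseteq> args F \<times> args F"
    using assms(1) by (simp add: AF_def att_def args_def)
  have S'_args: "S' \<subseteq> args F - (S \<union> plus F S)"
    using assms(3) by (simp add: admissible_def)
  have defends_S: "\<forall>a\<in>S. \<forall>b. (b, a) \<in> att F \<longrightarrow> (\<exists>c\<in>S. (c, b) \<in> att F)"
    using assms(2) by (simp add: admissible_def)
  have "conflict_free F (S \<union> S')"
    using assms(2,3) S'_args defends_S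
    unfolding admissible_def conflict_free_def plus_def att_reduct by blast
  moreover have "\<exists>c\<in>S \<union> S'. (c, b) \<in> att F" if "a \<in> S \<union> S'" "(b, a) \<in> att F" for a b
  proof (cases "a \<in> S \<or> b \<in> plus F S")
    case True
    then show ?thesis using that defends_S unfolding plus_def by blast
  next
    case False
    with that S'_args att_args have "(b, a) \<in> att (reduct F S)" "a \<in> S'"
      by (auto simp: plus_def)
    then show ?thesis using assms(3) unfolding admissible_def att_reduct by blast
  qed
  ultimately show ?thesis
    using assms(2) S'_args unfolding admissible_def by blast
qed

lemma reachable_reduct_admissible:
  assumes "AF F" and selects_IS: "\<And>X Y Z. \<alpha> X Y Z \<subseteq> X \<union> Y \<union> Z"
    and "(trans_step \<alpha>)\<^sup>*\<^sup>* (F, {}) (G, S)"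
  shows "G = reduct F S \<and> admissible F S"
  using assms(3)
proof (induction rule: rtranclp_induct2)
  case refl
  then show ?case
    using assms(1) by (simp add: reduct_empty admissible_def conflict_free_def)
next
  case (step G S G' S')
  then obtain T where T: "T \<in> \<alpha> (IS_u G) (IS_uc G) (IS_c G)" "G' = reduct G T" "S' = S \<union> T"
    unfolding trans_step_def by blast
  have "T \<in> IS G"
    using T(1) selects_IS by (auto simp: IS_u_def IS_uc_def IS_c_def)
  with step.IH have T_adm: "admissible (reduct F S) T"
    by (simp add: IS_def initial_def)
  then have "G' = reduct F S'"
    using T step.IH by (simp add: reduct_reduct admissible_def)
  then show ?case
    using admissible_union_reduct[OF assms(1)] step.IH T_adm T(3) by blast
qed

lemma preferred_extension_exists:
  assumes "AF F" "admissible F S"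
  shows "\<exists>P. preferred F P \<and> S \<subseteq> P"
proof -
  have "{T. admissible F T} \<subseteq> Pow (args F)"
    by (auto simp: admissible_def)
  moreover have "finite (Pow (args F))"
    using assms(1) by (simp add: AF_def args_def)
  ultimately have "finite {T. admissible F T}"
    by (rule finite_subset)
  then obtain P where "P \<in> {T. admissible F T}" "S \<subseteq> P"
      "\<forall>T \<in> {T. admissible F T}. P \<subseteq> T \<longrightarrow> P = T"
    using finite_has_maximal2[of "{T. admissible F T}" S] assms(2) by blast
  then show ?thesis
    unfolding preferred_def by blast
qed

lemma initial_subset_exists:
  assumes "finite J" "admissible G J" "J \<noteq> {}"
  shows "\<exists>K. initial G K \<and> K \<subseteq> J"
  using assms
proof (induction "card J" arbitrary: J rule: less_induct)
  case less
  show ?case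
  proof (cases "initial G J")
    case False
    then obtain T where T: "T \<noteq> {}" "T \<subset> J" "admissible G T"
      using less.prems unfolding initial_def by blast
    with less.prems(1) have "card T < card J" "finite T"
      by (auto intro: psubset_card_mono finite_subset)
    then obtain K where "initial G K" "K \<subseteq> T"
      using less.hyps T by blast
    with T show ?thesis by blast
  qed blast
qed

lemma conflict_free_union_ideal:
  assumes "AF F" "ideal_ext F I" "admissible F T"
  shows "conflict_free F (T \<union> I)"
proof -
  obtain P where "preferred F P" "T \<subseteq> P"
    using preferred_extension_exists[OF assms(1,3)] by blast
  moreover from this have "I \<subseteq> P"
    using assms(2) by (simp add: ideal_ext_def)
  ultimately show ?thesis
    unfolding preferred_def admissible_def conflict_free_def by blast
qed

lemma admissible_reduct_diff:
  assumes "admissible F I" "conflict_free F (E \<union> I)"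
  shows "admissible (reduct F E) (I - E)"
  using assms unfolding admissible_def conflict_free_def plus_def att_reduct args_reduct
  by (auto 5 4)

lemma ideal_subset_if_no_unchallenged:
  assumes "AF F" "ideal_ext F I" "admissible F E"
    and no_unchallenged: "IS_u (reduct F E) \<union> IS_uc (reduct F E) = {}"
  shows "I \<subseteq> E"
proof (rule ccontr)
  assume "\<not> I \<subseteq> E"
  have "admissible (reduct F E) (I - E)"
    using assms(1-3) by (simp add: admissible_reduct_diff conflict_free_union_ideal ideal_ext_def)
  moreover have "finite (I - E)"
    using assms(1,2) finite_subset[of I "args F"]
    by (simp add: ideal_ext_def admissible_def AF_def args_def)
  ultimately obtain K where K: "initial (reduct F E) K" "K \<subseteq> I - E"
    using initial_subset_exists \<open>\<not> I \<subseteq> E\<close> by blast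
  have "\<not> attacks_set (reduct F E) K' K" if "K' \<in> IS (reduct F E)" for K'
  proof -
    from that have "admissible F (E \<union> K')"
      using admissible_union_reduct[OF assms(1,3)] by (simp add: IS_def initial_def)
    then have "conflict_free F (E \<union> K' \<union> I)"
      using conflict_free_union_ideal[OF assms(1,2)] by blast
    then show ?thesis
      using K(2) unfolding attacks_set_def plus_def conflict_free_def att_reduct by blast
  qed
  then have "K \<in> IS_u (reduct F E) \<union> IS_uc (reduct F E)"
    using K(1) by (auto simp: IS_def IS_u_def IS_uc_def)
  with no_unchallenged show False by blast
qed

theorem theorem10:
  fixes F F' :: "'a af" and E Eid :: "'a set"
  assumes "AF F"
    and "leadsto alpha0 beta0 F {} F' E"
    and "ideal_ext F Eid"
  shows "(\<exists>E'. preferred F E' \<and> E \<subseteq> E') \<and> Eid \<subseteq> E"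
proof -
  have reach: "(trans_step alpha0)\<^sup>*\<^sup>* (F, {}) (F', E)" and terminal: "beta0 F' E"
    using assms(2) by (auto simp: leadsto_def)
  have "\<And>X Y Z. alpha0 X Y Z \<subseteq> X \<union> Y \<union> Z"
    by (auto simp: alpha0_def)
  then have "F' = reduct F E" and E_adm: "admissible F E"
    using reachable_reduct_admissible[OF assms(1) _ reach] by auto
  then show ?thesis
    using preferred_extension_exists[OF assms(1) E_adm] terminal
      ideal_subset_if_no_unchallenged[OF assms(1,3) E_adm]
    by (simp add: beta0_def)
qed

end
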